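(* Consider an $(M,K)$ product broadcast channel with one sender, $K$ intended receivers and one eavesdropper. For $j=1,\dots,M$ let $\mathcal{P}_j$ be the set of all conditional distributions $p'(y_{1j},\dots,y_{Kj},y_{ej}\mid x_j)$ whose conditional marginals $p'(y_{ij}\mid x_j)$ ($i=1,\dots,K$) and $p'(y_{ej}\mid x_j)$ coincide with those of the true channel $j$, and let $\mathcal{P}=\mathcal{P}_1\times\cdots\times\mathcal{P}_M$. Then the common-message-secrecy-capacity $C$ satisfies $$C\le \min_{\mathcal{P}}\ \max_{\prod_{j=1}^M p(x_j)}\ \min_{i\in\{1,\dots,K\}}\ \sum_{j=1}^M I(X_j;Y_{ij}\mid Y_{ej}),$$ where the outer minimum is over $(p'_1,\dots,p'_M)\in\mathcal{P}$, the maximum is over product input distributions, and each mutual information is evaluated under the joint distribution $p(x_j)\,p'_j(y_{1j},\dots,y_{Kj},y_{ej}\mid x_j)$.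
   Context: An $(M,K)$ product broadcast channel: one sender, $K$ intended receivers, one eavesdropper (index $e$), and $M$ parallel channels with finite input alphabet $\mathcal{X}$ and finite output alphabet $\mathcal{Y}$, memoryless and mutually independent: $\Pr(\{y_{1j}^n,\dots,y_{Kj}^n,y_{ej}^n\}_{j=1}^M\mid\{x_j^n\}_{j=1}^M)=\prod_{j=1}^M\prod_{t=1}^n \Pr(y_{1j}(t),\dots,y_{Kj}(t),y_{ej}(t)\mid x_j(t))$. Here $x_j^n$ is the input sequence on channel $j$ and $y_{ij}^n$ the output of receiver $i$ (or eavesdropper $i=e$) on channel $j$. An $(n,2^{nR})$ code consists of a message set $\{1,\dots,2^{nR}\}$, a possibly stochastic encoder mapping a message $W$ to $(x_1^n,\dots,x_M^n)\in(\mathcal{X}^n)^M$, and decoders $\Phi_{i,n}:(\mathcal{Y}^n)^M\to\{1,\dots,2^{nR}\}$ producing $\hat W_i$ from $(y_{i1}^n,\dots,y_{iM}^n)$, $i=1,\dots,K$. A rate $R$ is an achievable common-message-secrecy-rate if for every $\varepsilon>0$ there is a length-$n$ code with $\Pr(W\neq\hat W_i)\le\varepsilon$ for all $i$ and $\frac1n H(W\mid Y_{e1}^n,\dots,Y_{eM}^n)\ge R-\varepsilon$. The common-message-secrecy-capacity is the supremum of achievable rates. *)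

theory Defs
  imports Complex_Main "HOL-Library.FuncSet"
begin

(* Receivers are indexed 0..<K, channels 0..<M, time instants 0..<n.
   A per-letter channel j is V :: 'x => (nat => 'y) => 'y => real,
   V x ys z = Pr(receiver outputs ys (ys i for i<K), eavesdropper output z | input x). *)

definition Yr :: "nat \<Rightarrow> (nat \<Rightarrow> 'y) set" where
  "Yr K = PiE {0..<K} (\<lambda>_. UNIV)"

definition is_letter_channel :: "nat \<Rightarrow> ('x \<Rightarrow> (nat \<Rightarrow> 'y) \<Rightarrow> 'y \<Rightarrow> real) \<Rightarrow> bool" where
  "is_letter_channel K V \<longleftrightarrow>
     (\<forall>x. \<forall>ys\<in>Yr K. \<forall>z. 0 \<le> V x ys z) \<and>
     (\<forall>x. (\<Sum>ys\<in>Yr K. \<Sum>z\<in>UNIV. V x ys z) = 1)"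

definition seqs :: "nat \<Rightarrow> nat \<Rightarrow> (nat \<Rightarrow> nat \<Rightarrow> 'a) set" where
  "seqs M n = PiE {0..<M} (\<lambda>_. PiE {0..<n} (\<lambda>_. UNIV))"

definition rec_outs :: "nat \<Rightarrow> nat \<Rightarrow> nat \<Rightarrow> (nat \<Rightarrow> nat \<Rightarrow> nat \<Rightarrow> 'y) set" where
  "rec_outs K M n = PiE {0..<K} (\<lambda>_. seqs M n)"

definition prod_chan ::
  "nat \<Rightarrow> nat \<Rightarrow> nat \<Rightarrow> (nat \<Rightarrow> 'x \<Rightarrow> (nat \<Rightarrow> 'y) \<Rightarrow> 'y \<Rightarrow> real)
   \<Rightarrow> (nat \<Rightarrow> nat \<Rightarrow> 'x) \<Rightarrow> (nat \<Rightarrow> nat \<Rightarrow> nat \<Rightarrow> 'y) \<Rightarrow> (nat \<Rightarrow> nat \<Rightarrow> 'y) \<Rightarrow> real" where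
  "prod_chan K M n W c yr ye =
     (\<Prod>j<M. \<Prod>t<n. W j (c j t) (\<lambda>i\<in>{0..<K}. yr i j t) (ye j t))"

definition num_msgs :: "nat \<Rightarrow> real \<Rightarrow> nat" where
  "num_msgs n R = nat \<lceil>2 powr (real n * R)\<rceil>"

(* stochastic encoder: E w c = Pr(codeword c | message w) *)
definition valid_encoder :: "nat \<Rightarrow> nat \<Rightarrow> nat \<Rightarrow> (nat \<Rightarrow> (nat \<Rightarrow> nat \<Rightarrow> 'x) \<Rightarrow> real) \<Rightarrow> bool" where
  "valid_encoder M n N E \<longleftrightarrow>
     (\<forall>w\<in>{1..N}. (\<forall>c\<in>seqs M n. 0 \<le> E w c) \<and> (\<Sum>c\<in>seqs M n. E w c) = 1)"

definition valid_decoders :: "nat \<Rightarrow> nat \<Rightarrow> nat \<Rightarrow> nat \<Rightarrow> (nat \<Rightarrow> (nat \<Rightarrow> nat \<Rightarrow> 'y) \<Rightarrow> nat) \<Rightarrow> bool" where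
  "valid_decoders K M n N D \<longleftrightarrow> (\<forall>i<K. \<forall>y\<in>seqs M n. D i y \<in> {1..N})"

definition err_prob ::
  "nat \<Rightarrow> nat \<Rightarrow> nat \<Rightarrow> (nat \<Rightarrow> 'x \<Rightarrow> (nat \<Rightarrow> 'y) \<Rightarrow> 'y \<Rightarrow> real) \<Rightarrow> nat
   \<Rightarrow> (nat \<Rightarrow> (nat \<Rightarrow> nat \<Rightarrow> 'x) \<Rightarrow> real) \<Rightarrow> (nat \<Rightarrow> (nat \<Rightarrow> nat \<Rightarrow> 'y) \<Rightarrow> nat) \<Rightarrow> nat \<Rightarrow> real" where
  "err_prob K M n W N E D i =
     (1 / real N) * (\<Sum>w\<in>{1..N}. \<Sum>c\<in>seqs M n. \<Sum>yr\<in>rec_outs K M n. \<Sum>ye\<in>seqs M n.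
        E w c * prod_chan K M n W c yr ye * (if D i (yr i) \<noteq> w then 1 else 0))"

definition joint_WYe ::
  "nat \<Rightarrow> nat \<Rightarrow> nat \<Rightarrow> (nat \<Rightarrow> 'x \<Rightarrow> (nat \<Rightarrow> 'y) \<Rightarrow> 'y \<Rightarrow> real) \<Rightarrow> nat
   \<Rightarrow> (nat \<Rightarrow> (nat \<Rightarrow> nat \<Rightarrow> 'x) \<Rightarrow> real) \<Rightarrow> nat \<Rightarrow> (nat \<Rightarrow> nat \<Rightarrow> 'y) \<Rightarrow> real" where
  "joint_WYe K M n W N E w ye =
     (1 / real N) * (\<Sum>c\<in>seqs M n. E w c * (\<Sum>yr\<in>rec_outs K M n. prod_chan K M n W c yr ye))"

definition cond_ent_WYe ::
  "nat \<Rightarrow> nat \<Rightarrow> nat \<Rightarrow> (nat \<Rightarrow> 'x \<Rightarrow> (nat \<Rightarrow> 'y) \<Rightarrow> 'y \<Rightarrow> real) \<Rightarrow> nat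
   \<Rightarrow> (nat \<Rightarrow> (nat \<Rightarrow> nat \<Rightarrow> 'x) \<Rightarrow> real) \<Rightarrow> real" where
  "cond_ent_WYe K M n W N E =
     (\<Sum>w\<in>{1..N}. \<Sum>ye\<in>(seqs M n :: (nat \<Rightarrow> nat \<Rightarrow> 'y) set).
        (let p = joint_WYe K M n W N E w ye;
             pz = (\<Sum>w'\<in>{1..N}. joint_WYe K M n W N E w' ye)
         in if p = 0 then 0 else p * log 2 (pz / p)))"

definition achievable :: "nat \<Rightarrow> nat \<Rightarrow> (nat \<Rightarrow> 'x \<Rightarrow> (nat \<Rightarrow> 'y) \<Rightarrow> 'y \<Rightarrow> real) \<Rightarrow> real \<Rightarrow> bool" where
  "achievable K M W R \<longleftrightarrow>
     (\<forall>\<epsilon>>0. \<exists>n>0. \<exists>(E :: nat \<Rightarrow> (nat \<Rightarrow> nat \<Rightarrow> 'x) \<Rightarrow> real) (D :: nat \<Rightarrow> (nat \<Rightarrow> nat \<Rightarrow> 'y) \<Rightarrow> nat).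
        valid_encoder M n (num_msgs n R) E \<and>
        valid_decoders K M n (num_msgs n R) D \<and>
        (\<forall>i<K. err_prob K M n W (num_msgs n R) E D i \<le> \<epsilon>) \<and>
        cond_ent_WYe K M n W (num_msgs n R) E / real n \<ge> R - \<epsilon>)"

definition secrecy_capacity :: "nat \<Rightarrow> nat \<Rightarrow> (nat \<Rightarrow> 'x \<Rightarrow> (nat \<Rightarrow> 'y) \<Rightarrow> 'y \<Rightarrow> real) \<Rightarrow> real" where
  "secrecy_capacity K M W = Sup {R. achievable K M W R}"

definition cmi :: "('a::finite \<Rightarrow> 'b::finite \<Rightarrow> 'c::finite \<Rightarrow> real) \<Rightarrow> real" where
  "cmi q = (\<Sum>x\<in>UNIV. \<Sum>y\<in>UNIV. \<Sum>z\<in>UNIV.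
     (let pxz = (\<Sum>y'\<in>UNIV. q x y' z); pyz = (\<Sum>x'\<in>UNIV. q x' y z);
          pz = (\<Sum>x'\<in>UNIV. \<Sum>y'\<in>UNIV. q x' y' z)
      in if q x y z = 0 then 0 else q x y z * log 2 (q x y z * pz / (pxz * pyz))))"

definition joint_xyz :: "nat \<Rightarrow> ('x \<Rightarrow> real) \<Rightarrow> ('x \<Rightarrow> (nat \<Rightarrow> 'y) \<Rightarrow> 'y \<Rightarrow> real) \<Rightarrow> nat
    \<Rightarrow> 'x \<Rightarrow> 'y \<Rightarrow> 'y \<Rightarrow> real" where
  "joint_xyz K px V i x y z = px x * (\<Sum>ys\<in>Yr K. if ys i = y then V x ys z else 0)"

definition same_marginals :: "nat \<Rightarrow> ('x \<Rightarrow> (nat \<Rightarrow> 'y) \<Rightarrow> 'y \<Rightarrow> real) \<Rightarrow> ('x \<Rightarrow> (nat \<Rightarrow> 'y) \<Rightarrow> 'y \<Rightarrow> real) \<Rightarrow> bool" where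
  "same_marginals K V V' \<longleftrightarrow>
     (\<forall>x. \<forall>i<K. \<forall>y. (\<Sum>ys\<in>Yr K. \<Sum>z\<in>UNIV. if ys i = y then V' x ys z else 0)
                    = (\<Sum>ys\<in>Yr K. \<Sum>z\<in>UNIV. if ys i = y then V x ys z else 0)) \<and>
     (\<forall>x z. (\<Sum>ys\<in>Yr K. V' x ys z) = (\<Sum>ys\<in>Yr K. V x ys z))"

definition compatible_channels :: "nat \<Rightarrow> nat \<Rightarrow> (nat \<Rightarrow> 'x \<Rightarrow> (nat \<Rightarrow> 'y) \<Rightarrow> 'y \<Rightarrow> real)
    \<Rightarrow> (nat \<Rightarrow> 'x \<Rightarrow> (nat \<Rightarrow> 'y) \<Rightarrow> 'y \<Rightarrow> real) set" where
  "compatible_channels K M W = {P'. \<forall>j<M. is_letter_channel K (P' j) \<and> same_marginals K (W j) (P' j)}"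

definition input_dists :: "nat \<Rightarrow> (nat \<Rightarrow> 'x::finite \<Rightarrow> real) set" where
  "input_dists M = {p. \<forall>j<M. (\<forall>x. 0 \<le> p j x) \<and> (\<Sum>x\<in>UNIV. p j x) = 1}"

definition secrecy_bound :: "nat \<Rightarrow> nat \<Rightarrow> (nat \<Rightarrow> 'x::finite \<Rightarrow> (nat \<Rightarrow> 'y::finite) \<Rightarrow> 'y \<Rightarrow> real) \<Rightarrow> real" where
  "secrecy_bound K M W =
     (INF P'\<in>compatible_channels K M W. SUP p\<in>input_dists M.
        Min ((\<lambda>i. \<Sum>j<M. cmi (joint_xyz K (p j) (P' j) i)) ` {0..<K}))"

end

theory Submission
  imports Defs "HOL-Real_Asymp.Real_Asymp"
begin

text \<open>
  Fix a compatible channel family P' and a code whose receiver i decodes with error probability at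
  most \<epsilon>. The joint law of (W, Y_e^n) and the error probability of receiver i involve only marginals
  of the letter channels, so the code may be analysed over P' instead of the true channel.
  Over P', let \<beta>_j(y | z) be the conditional law of Y_ij given Y_ej when X_j has the time-averaged
  input law of the code, and let g(w | y) give mass 1 - \<epsilon> to the decoded message and \<epsilon>/N to each
  other message. Gibbs' inequality for the joint law of (W, X^n, Y_i^n, Y_e^n) against the
  sub-probability p(z) g(w | y) \<Prod>_t \<beta>(y_t | z_t) p(x^n | w, z) gives
    H(W | Y_e^n) \<le> E[\<Sum>_{j,t} \<iota>_j(X_jt; Y_ijt | Y_ejt)] - E[log g(W | Y_i^n)],
  where \<iota>_j is the single-letter conditional information density under the averaged input law.
  Its mean is exactly n \<Sum>_j I(X_j; Y_ij | Y_ej) by linearity, and the last term is at most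
  -log(1 - \<epsilon>) - \<epsilon> log \<epsilon> + \<epsilon> log N. Dividing by n and letting \<epsilon> \<rightarrow> 0 bounds every achievable rate
  by the minimum over i of these sums for the averaged input law, for every compatible P'.
\<close>

section \<open>Sums over sequence spaces\<close>

lemma seqs_eq_PiE: "seqs M n = PiE {..<M} (\<lambda>_. PiE {..<n} (\<lambda>_. UNIV))"
  unfolding seqs_def by (simp add: atLeast0LessThan)

lemma finite_seqs [simp]: "finite (seqs M n :: (nat \<Rightarrow> nat \<Rightarrow> 'a::finite) set)"
  unfolding seqs_def by (intro finite_PiE) auto

lemma finite_Yr [simp]: "finite (Yr K :: (nat \<Rightarrow> 'a::finite) set)"
  unfolding Yr_def by (intro finite_PiE) auto

lemma sum_PiE_PiE_prod:
  fixes F :: "nat \<Rightarrow> nat \<Rightarrow> 'a \<Rightarrow> 'b::comm_semiring_1"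
  assumes "finite B"
  shows "(\<Sum>u\<in>PiE {..<M} (\<lambda>_. PiE {..<n} (\<lambda>_. B)). \<Prod>j<M. \<Prod>t<n. F j t (u j t))
       = (\<Prod>j<M. \<Prod>t<n. \<Sum>b\<in>B. F j t b)"
proof -
  have "(\<Prod>j<M. \<Prod>t<n. \<Sum>b\<in>B. F j t b) = (\<Prod>j<M. \<Sum>g\<in>PiE {..<n} (\<lambda>_. B). \<Prod>t<n. F j t (g t))"
    using assms by (intro prod.cong refl prod_sum_PiE) auto
  also have "\<dots> = (\<Sum>u\<in>PiE {..<M} (\<lambda>_. PiE {..<n} (\<lambda>_. B)). \<Prod>j<M. \<Prod>t<n. F j t (u j t))"
    using assms by (intro prod_sum_PiE) (auto intro: finite_PiE)
  finally show ?thesis by simp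
qed

lemma sum_seqs_prod:
  fixes F :: "nat \<Rightarrow> nat \<Rightarrow> 'a::finite \<Rightarrow> 'b::comm_semiring_1"
  shows "(\<Sum>y\<in>seqs M n. \<Prod>j<M. \<Prod>t<n. F j t (y j t)) = (\<Prod>j<M. \<Prod>t<n. \<Sum>a\<in>UNIV. F j t a)"
  unfolding seqs_eq_PiE by (rule sum_PiE_PiE_prod) simp

lemma prod_prod_delta:
  fixes f :: "nat \<Rightarrow> nat \<Rightarrow> 'a::comm_monoid_mult"
  assumes "j0 < M" "t0 < n"
  shows "(\<Prod>j<M. \<Prod>t<n. if j = j0 \<and> t = t0 then f j t else 1) = f j0 t0"
proof -
  have "(\<Prod>t<n. if j = j0 \<and> t = t0 then f j t else 1) = (if j = j0 then f j0 t0 else 1)" for j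
    using assms by (cases "j = j0") (simp_all add: prod.delta)
  then show ?thesis using assms by (simp add: prod.delta)
qed

lemma sum_seqs_pairs_prod_letter:
  fixes G :: "nat \<Rightarrow> nat \<Rightarrow> 'a::finite \<Rightarrow> 'b::finite \<Rightarrow> real" and \<psi> :: "'a \<Rightarrow> 'b \<Rightarrow> real"
  assumes G: "\<And>j t. j < M \<Longrightarrow> t < n \<Longrightarrow> (\<Sum>a\<in>UNIV. \<Sum>b\<in>UNIV. G j t a b) = 1"
    and j0: "j0 < M" and t0: "t0 < n"
  shows "(\<Sum>y\<in>seqs M n. \<Sum>z\<in>seqs M n. (\<Prod>j<M. \<Prod>t<n. G j t (y j t) (z j t)) * \<psi> (y j0 t0) (z j0 t0))
       = (\<Sum>a\<in>UNIV. \<Sum>b\<in>UNIV. G j0 t0 a b * \<psi> a b)"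
proof -
  define G' where "G' j t a b = G j t a b * (if j = j0 \<and> t = t0 then \<psi> a b else 1)" for j t a b
  have "(\<Prod>j<M. \<Prod>t<n. G j t (y j t) (z j t)) * \<psi> (y j0 t0) (z j0 t0)
      = (\<Prod>j<M. \<Prod>t<n. G' j t (y j t) (z j t))" for y z
  proof -
    have "(\<Prod>j<M. \<Prod>t<n. G' j t (y j t) (z j t))
        = (\<Prod>j<M. \<Prod>t<n. G j t (y j t) (z j t))
          * (\<Prod>j<M. \<Prod>t<n. if j = j0 \<and> t = t0 then \<psi> (y j t) (z j t) else 1)"
      by (simp only: G'_def prod.distrib)
    then show ?thesis using prod_prod_delta[OF j0 t0, of "\<lambda>j t. \<psi> (y j t) (z j t)"] by simp
  qed
  then have "(\<Sum>y\<in>seqs M n. \<Sum>z\<in>seqs M n. (\<Prod>j<M. \<Prod>t<n. G j t (y j t) (z j t)) * \<psi> (y j0 t0) (z j0 t0))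
      = (\<Sum>y\<in>seqs M n. \<Sum>z\<in>seqs M n. \<Prod>j<M. \<Prod>t<n. G' j t (y j t) (z j t))"
    by simp
  also have "\<dots> = (\<Sum>y\<in>seqs M n. \<Prod>j<M. \<Prod>t<n. \<Sum>b\<in>UNIV. G' j t (y j t) b)"
    by (intro sum.cong refl) (rule sum_seqs_prod)
  also have "\<dots> = (\<Prod>j<M. \<Prod>t<n. \<Sum>a\<in>UNIV. \<Sum>b\<in>UNIV. G' j t a b)"
    by (rule sum_seqs_prod)
  also have "\<dots> = (\<Prod>j<M. \<Prod>t<n. if j = j0 \<and> t = t0 then \<Sum>a\<in>UNIV. \<Sum>b\<in>UNIV. G j0 t0 a b * \<psi> a b else 1)"
    using G by (intro prod.cong refl) (auto simp: G'_def)
  also have "\<dots> = (\<Sum>a\<in>UNIV. \<Sum>b\<in>UNIV. G j0 t0 a b * \<psi> a b)"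
    using j0 t0 by (rule prod_prod_delta)
  finally show ?thesis .
qed

definition transpose_outs :: "nat \<Rightarrow> nat \<Rightarrow> nat \<Rightarrow> (nat \<Rightarrow> nat \<Rightarrow> nat \<Rightarrow> 'y) \<Rightarrow> nat \<Rightarrow> nat \<Rightarrow> nat \<Rightarrow> 'y" where
  "transpose_outs K M n u = (\<lambda>i\<in>{0..<K}. \<lambda>j\<in>{0..<M}. \<lambda>t\<in>{0..<n}. u j t i)"

lemma sum_rec_outs_transpose:
  fixes F :: "(nat \<Rightarrow> nat \<Rightarrow> nat \<Rightarrow> 'y) \<Rightarrow> 'b::comm_monoid_add"
  shows "(\<Sum>yr\<in>rec_outs K M n. F yr)
       = (\<Sum>u\<in>PiE {..<M} (\<lambda>_. PiE {..<n} (\<lambda>_. Yr K)). F (transpose_outs K M n u))"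
proof -
  define untranspose where "untranspose yr = (\<lambda>j\<in>{0..<M}. \<lambda>t\<in>{0..<n}. \<lambda>i\<in>{0..<K}. yr i j t)"
    for yr :: "nat \<Rightarrow> nat \<Rightarrow> nat \<Rightarrow> 'y"
  have inverse: "transpose_outs K M n (untranspose yr) = yr" if "yr \<in> rec_outs K M n" for yr
    using that unfolding transpose_outs_def untranspose_def rec_outs_def seqs_def
    by (auto simp: fun_eq_iff PiE_iff extensional_def)
  show ?thesis
  proof (rule sum.reindex_bij_witness[of _ "transpose_outs K M n" untranspose])
    show "F (transpose_outs K M n (untranspose yr)) = F yr" if "yr \<in> rec_outs K M n" for yr
      using inverse[OF that] by simp
  qed (use inverse in \<open>auto simp: transpose_outs_def untranspose_def rec_outs_def seqs_def Yr_def
                            fun_eq_iff PiE_iff extensional_def\<close>)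
qed

lemma sum_PiE_prod_project:
  fixes G :: "nat \<Rightarrow> nat \<Rightarrow> 'a \<Rightarrow> real" and \<pi> :: "'a \<Rightarrow> 'b::finite"
    and f :: "(nat \<Rightarrow> nat \<Rightarrow> 'b) \<Rightarrow> real"
  assumes A: "finite A"
  shows "(\<Sum>u\<in>PiE {..<M} (\<lambda>_. PiE {..<n} (\<lambda>_. A)).
            (\<Prod>j<M. \<Prod>t<n. G j t (u j t)) * f (\<lambda>j\<in>{0..<M}. \<lambda>t\<in>{0..<n}. \<pi> (u j t)))
       = (\<Sum>y\<in>seqs M n. f y * (\<Prod>j<M. \<Prod>t<n. \<Sum>a\<in>A. if \<pi> a = y j t then G j t a else 0))"
proof -
  define U where "U = PiE {..<M} (\<lambda>_. PiE {..<n} (\<lambda>_. A))"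
  define proj where "proj u = (\<lambda>j\<in>{0..<M}. \<lambda>t\<in>{0..<n}. \<pi> (u j t))" for u
  have proj_seqs: "proj u \<in> seqs M n" for u
    unfolding proj_def seqs_def by auto
  have indicator: "(\<Prod>j<M. \<Prod>t<n. if \<pi> (u j t) = y j t then 1 else 0 :: real)
      = (if y = proj u then 1 else 0)" if y: "y \<in> seqs M n" for y u
  proof -
    have "y = proj u \<longleftrightarrow> (\<forall>j<M. \<forall>t<n. \<pi> (u j t) = y j t)"
      using y unfolding proj_def seqs_def by (auto simp: fun_eq_iff PiE_iff extensional_def)
    then show ?thesis by (auto simp: prod_zero_iff)
  qed
  have "(\<Sum>y\<in>seqs M n. f y * (\<Prod>j<M. \<Prod>t<n. \<Sum>a\<in>A. if \<pi> a = y j t then G j t a else 0))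
      = (\<Sum>y\<in>seqs M n. f y * (\<Sum>u\<in>U. \<Prod>j<M. \<Prod>t<n. G j t (u j t) * (if \<pi> (u j t) = y j t then 1 else 0)))"
    unfolding U_def using A by (subst sum_PiE_PiE_prod) (simp_all add: if_distrib cong: if_cong)
  also have "\<dots> = (\<Sum>y\<in>seqs M n. \<Sum>u\<in>U. f y * ((\<Prod>j<M. \<Prod>t<n. G j t (u j t)) * (if y = proj u then 1 else 0)))"
    by (intro sum.cong refl) (simp add: sum_distrib_left prod.distrib indicator)
  also have "\<dots> = (\<Sum>u\<in>U. \<Sum>y\<in>seqs M n. if y = proj u then (\<Prod>j<M. \<Prod>t<n. G j t (u j t)) * f (proj u) else 0)"
    by (subst sum.swap) (intro sum.cong refl, simp)
  also have "\<dots> = (\<Sum>u\<in>U. (\<Prod>j<M. \<Prod>t<n. G j t (u j t)) * f (proj u))"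
    using proj_seqs by (simp add: sum.delta')
  finally show ?thesis unfolding U_def proj_def ..
qed

lemma sum_rec_outs_prod_receiver:
  fixes G :: "nat \<Rightarrow> nat \<Rightarrow> (nat \<Rightarrow> 'y::finite) \<Rightarrow> real" and f :: "(nat \<Rightarrow> nat \<Rightarrow> 'y) \<Rightarrow> real"
  assumes i0: "i0 < K"
  shows "(\<Sum>yr\<in>rec_outs K M n. (\<Prod>j<M. \<Prod>t<n. G j t (\<lambda>i\<in>{0..<K}. yr i j t)) * f (yr i0))
       = (\<Sum>y\<in>seqs M n. f y * (\<Prod>j<M. \<Prod>t<n. \<Sum>ys\<in>Yr K. if ys i0 = y j t then G j t ys else 0))"
proof -
  define U where "U = PiE {..<M} (\<lambda>_. PiE {..<n} (\<lambda>_. Yr K :: (nat \<Rightarrow> 'y) set))"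
  have "(\<Prod>j<M. \<Prod>t<n. G j t (\<lambda>i\<in>{0..<K}. transpose_outs K M n u i j t)) * f (transpose_outs K M n u i0)
      = (\<Prod>j<M. \<Prod>t<n. G j t (u j t)) * f (\<lambda>j\<in>{0..<M}. \<lambda>t\<in>{0..<n}. u j t i0)" if "u \<in> U" for u
  proof -
    have "(\<lambda>i\<in>{0..<K}. transpose_outs K M n u i j t) = u j t" if "j < M" "t < n" for j t
      using \<open>u \<in> U\<close> that unfolding U_def Yr_def transpose_outs_def
      by (auto simp: fun_eq_iff PiE_iff extensional_def)
    moreover have "transpose_outs K M n u i0 = (\<lambda>j\<in>{0..<M}. \<lambda>t\<in>{0..<n}. u j t i0)"
      using i0 unfolding transpose_outs_def by simp
    ultimately show ?thesis by simp
  qed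
  then have "(\<Sum>yr\<in>rec_outs K M n. (\<Prod>j<M. \<Prod>t<n. G j t (\<lambda>i\<in>{0..<K}. yr i j t)) * f (yr i0))
      = (\<Sum>u\<in>U. (\<Prod>j<M. \<Prod>t<n. G j t (u j t)) * f (\<lambda>j\<in>{0..<M}. \<lambda>t\<in>{0..<n}. u j t i0))"
    unfolding sum_rec_outs_transpose U_def[symmetric] by (intro sum.cong refl) simp
  also have "\<dots> = (\<Sum>y\<in>seqs M n. f y * (\<Prod>j<M. \<Prod>t<n. \<Sum>ys\<in>Yr K. if ys i0 = y j t then G j t ys else 0))"
    unfolding U_def by (rule sum_PiE_prod_project) simp
  finally show ?thesis .
qed

lemma sum_Yr_if_eq:
  fixes F :: "(nat \<Rightarrow> 'y::finite) \<Rightarrow> 'b::comm_monoid_add"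
  shows "(\<Sum>a\<in>UNIV. \<Sum>ys\<in>Yr K. if ys i = a then F ys else 0) = (\<Sum>ys\<in>Yr K. F ys)"
  by (subst sum.swap) (simp add: sum.delta)

section \<open>Information measures\<close>

lemma log_prod:
  fixes f :: "'a \<Rightarrow> real"
  assumes "finite A" "\<And>a. a \<in> A \<Longrightarrow> f a \<noteq> 0"
  shows "log b (prod f A) = (\<Sum>a\<in>A. log b (f a))"
  using assms by (simp add: log_def ln_prod sum_divide_distrib)

lemma mult_log_ratio_le:
  fixes q t :: real
  assumes "0 < q" "0 < t"
  shows "q * log 2 (t / q) \<le> (t - q) / ln 2"
proof -
  have "log 2 (t / q) \<le> (t / q - 1) / ln 2"
    unfolding log_def using assms by (intro divide_right_mono ln_le_minus_one) auto
  then have "q * log 2 (t / q) \<le> q * ((t / q - 1) / ln 2)"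
    using assms(1) by (rule mult_left_mono[OF _ less_imp_le])
  also have "\<dots> = (t - q) / ln 2"
    using assms(1) by (simp add: field_simps)
  finally show ?thesis .
qed

lemma cmi_le_card:
  fixes q :: "'a::finite \<Rightarrow> 'b::finite \<Rightarrow> 'c::finite \<Rightarrow> real"
  assumes nonneg: "\<And>x y z. 0 \<le> q x y z" and total: "(\<Sum>x\<in>UNIV. \<Sum>y\<in>UNIV. \<Sum>z\<in>UNIV. q x y z) \<le> 1"
  shows "cmi q \<le> real (card (UNIV :: 'a set) * card (UNIV :: 'b set) * card (UNIV :: 'c set)) / ln 2"
proof -
  have term_le: "(if a = 0 then 0 else a * log 2 (a * Z / (P * Y))) \<le> 1 / ln 2"
    if "0 \<le> a" "a \<le> P" "a \<le> Y" "P \<le> Z" "Z \<le> 1" for a P Y Z :: real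
  proof (cases "a = 0")
    case False
    then have pos: "0 < a" "0 < P" "0 < Y" "0 < Z" using that by linarith+
    have "a * a * Z \<le> P * Y * 1" using that pos by (intro mult_mono) auto
    then have "a * Z / (P * Y) \<le> 1 / a" using pos by (simp add: field_simps)
    then have "a * log 2 (a * Z / (P * Y)) \<le> a * log 2 (1 / a)"
      using pos by (intro mult_left_mono log_mono) auto
    also have "\<dots> \<le> (1 - a) / ln 2" using mult_log_ratio_le[of a 1] pos by simp
    also have "\<dots> \<le> 1 / ln 2" using pos by (intro divide_right_mono) auto
    finally show ?thesis using False by simp
  qed simp
  have "cmi q \<le> (\<Sum>x\<in>(UNIV::'a set). \<Sum>y\<in>(UNIV::'b set). \<Sum>z\<in>(UNIV::'c set). 1 / ln 2)"
    unfolding cmi_def Let_def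
  proof (intro sum_mono term_le)
    fix x y z
    show "q x y z \<le> (\<Sum>y'\<in>UNIV. q x y' z)" "q x y z \<le> (\<Sum>x'\<in>UNIV. q x' y z)"
      by (auto intro: member_le_sum nonneg)
    show "(\<Sum>y'\<in>UNIV. q x y' z) \<le> (\<Sum>x'\<in>UNIV. \<Sum>y'\<in>UNIV. q x' y' z)"
      by (rule member_le_sum[where f = "\<lambda>x. \<Sum>y'\<in>UNIV. q x y' z"]) (auto intro: nonneg sum_nonneg)
    have "(\<Sum>x'\<in>UNIV. \<Sum>y'\<in>UNIV. q x' y' z) \<le> (\<Sum>x'\<in>UNIV. \<Sum>y'\<in>UNIV. \<Sum>z'\<in>UNIV. q x' y' z')"
      by (intro sum_mono member_le_sum[where f = "\<lambda>z'. q _ _ z'"]) (auto intro: nonneg)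
    then show "(\<Sum>x'\<in>UNIV. \<Sum>y'\<in>UNIV. q x' y' z) \<le> 1" using total by linarith
  qed (rule nonneg)
  also have "\<dots> = real (card (UNIV :: 'a set) * card (UNIV :: 'b set) * card (UNIV :: 'c set)) / ln 2" by simp
  finally show ?thesis .
qed

lemma joint_xyz_nonneg:
  assumes "is_letter_channel K V" "\<And>x. 0 \<le> px x"
  shows "0 \<le> joint_xyz K px V i x y z"
  using assms unfolding joint_xyz_def is_letter_channel_def
  by (intro mult_nonneg_nonneg sum_nonneg) auto

lemma sum_joint_xyz:
  assumes V: "is_letter_channel K V" and px: "(\<Sum>x\<in>UNIV. px x) = 1"
  shows "(\<Sum>x\<in>UNIV. \<Sum>y\<in>UNIV. \<Sum>z\<in>UNIV. joint_xyz K px V i x (y::'y::finite) z) = 1"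
proof -
  have channel_sum: "(\<Sum>y\<in>UNIV. \<Sum>z\<in>UNIV. \<Sum>ys\<in>Yr K. if ys i = y then V x ys z else 0) = 1" for x
  proof -
    have "(\<Sum>y\<in>UNIV. \<Sum>z\<in>UNIV. \<Sum>ys\<in>Yr K. if ys i = y then V x ys z else 0)
        = (\<Sum>y\<in>UNIV. \<Sum>ys\<in>Yr K. if ys i = y then (\<Sum>z\<in>UNIV. V x ys z) else 0)"
      by (intro sum.cong refl) (subst sum.swap, auto intro!: sum.cong)
    also have "\<dots> = (\<Sum>ys\<in>Yr K. \<Sum>z\<in>UNIV. V x ys z)" by (rule sum_Yr_if_eq)
    also have "\<dots> = 1" using V unfolding is_letter_channel_def by simp
    finally show ?thesis .
  qed
  show ?thesis
    unfolding joint_xyz_def using px by (simp add: sum_distrib_left[symmetric] channel_sum)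
qed

section \<open>Codes and input laws\<close>

lemma one_le_num_msgs: "1 \<le> num_msgs n R"
proof -
  have "1 \<le> \<lceil>2 powr (real n * R)\<rceil>" by (simp add: one_le_ceiling)
  then show ?thesis unfolding num_msgs_def by arith
qed

lemma num_msgs_nonpos: "R \<le> 0 \<Longrightarrow> num_msgs n R = 1"
proof -
  assume "R \<le> 0"
  then have "(2::real) powr (real n * R) \<le> 2 powr 0"
    by (intro powr_mono) (auto simp: mult_nonneg_nonpos)
  then have "\<lceil>(2::real) powr (real n * R)\<rceil> = 1" by (simp add: ceiling_eq_iff)
  then show ?thesis unfolding num_msgs_def by simp
qed

lemma log_num_msgs_le: "log 2 (real (num_msgs n R)) \<le> real n * \<bar>R\<bar> + 1"
proof -
  have "real (num_msgs n R) = of_int \<lceil>2 powr (real n * R)\<rceil>" unfolding num_msgs_def by simp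
  also have "\<dots> \<le> 2 powr (real n * R) + 1" by linarith
  also have "\<dots> \<le> 2 powr (real n * \<bar>R\<bar>) + 2 powr (real n * \<bar>R\<bar>)"
    by (intro add_mono powr_mono ge_one_powr_ge_zero) (auto intro: mult_left_mono)
  also have "\<dots> = 2 powr (real n * \<bar>R\<bar> + 1)" by (simp add: powr_add)
  finally have "real (num_msgs n R) \<le> 2 powr (real n * \<bar>R\<bar> + 1)" .
  then have "log 2 (real (num_msgs n R)) \<le> log 2 (2 powr (real n * \<bar>R\<bar> + 1))"
    using one_le_num_msgs[of n R] by (subst log_le_cancel_iff) auto
  then show ?thesis by simp
qed

lemma achievable_nonpos:
  fixes W :: "nat \<Rightarrow> 'x::finite \<Rightarrow> (nat \<Rightarrow> 'y::finite) \<Rightarrow> 'y \<Rightarrow> real"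
  assumes R: "R \<le> 0"
  shows "achievable K M W R"
proof -
  define c0 :: "nat \<Rightarrow> nat \<Rightarrow> 'x" where "c0 = (\<lambda>j\<in>{0..<M}. \<lambda>t\<in>{0..<1}. undefined)"
  define E :: "nat \<Rightarrow> (nat \<Rightarrow> nat \<Rightarrow> 'x) \<Rightarrow> real" where "E w c = (if c = c0 then 1 else 0)" for w c
  define D :: "nat \<Rightarrow> (nat \<Rightarrow> nat \<Rightarrow> 'y) \<Rightarrow> nat" where "D i y = 1" for i y
  have "c0 \<in> seqs M 1" unfolding c0_def seqs_def by auto
  then have "valid_encoder M 1 1 E" unfolding valid_encoder_def E_def by (simp add: sum.delta')
  moreover have "valid_decoders K M 1 1 D" unfolding valid_decoders_def D_def by simp
  moreover have "err_prob K M 1 W 1 E D i = 0" for i unfolding err_prob_def D_def by simp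
  moreover have "cond_ent_WYe K M 1 W 1 E = 0"
    unfolding cond_ent_WYe_def Let_def by (intro sum.neutral ballI) (auto split: if_splits)
  ultimately show ?thesis
    unfolding achievable_def using R
    by (intro allI impI exI[of _ 1] conjI exI[of _ E] exI[of _ D]) (auto simp: num_msgs_nonpos)
qed

definition letter_input_law ::
  "nat \<Rightarrow> nat \<Rightarrow> nat \<Rightarrow> (nat \<Rightarrow> (nat \<Rightarrow> nat \<Rightarrow> 'x) \<Rightarrow> real) \<Rightarrow> nat \<Rightarrow> nat \<Rightarrow> 'x \<Rightarrow> real" where
  "letter_input_law M n N E j t x = (\<Sum>w\<in>{1..N}. \<Sum>c\<in>seqs M n. if c j t = x then E w c / real N else 0)"

definition avg_input_law ::
  "nat \<Rightarrow> nat \<Rightarrow> nat \<Rightarrow> (nat \<Rightarrow> (nat \<Rightarrow> nat \<Rightarrow> 'x) \<Rightarrow> real) \<Rightarrow> nat \<Rightarrow> 'x \<Rightarrow> real" where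
  "avg_input_law M n N E j x = (\<Sum>t<n. letter_input_law M n N E j t x) / real n"

lemma sum_letter_input_law_mult:
  fixes F :: "'x::finite \<Rightarrow> real"
  shows "(\<Sum>x\<in>UNIV. letter_input_law M n N E j t x * F x)
       = (\<Sum>w\<in>{1..N}. \<Sum>c\<in>seqs M n. E w c / real N * F (c j t))"
proof -
  have "(\<Sum>x\<in>UNIV. letter_input_law M n N E j t x * F x)
      = (\<Sum>x\<in>UNIV. \<Sum>w\<in>{1..N}. \<Sum>c\<in>seqs M n. if c j t = x then E w c / real N * F x else 0)"
    unfolding letter_input_law_def sum_distrib_right by (intro sum.cong refl) auto
  also have "\<dots> = (\<Sum>w\<in>{1..N}. \<Sum>c\<in>seqs M n. \<Sum>x\<in>UNIV. if c j t = x then E w c / real N * F x else 0)"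
    by (subst sum.swap) (simp add: sum.swap[of _ UNIV])
  finally show ?thesis by (simp add: sum.delta)
qed

lemma letter_input_law_nonneg:
  "valid_encoder M n N E \<Longrightarrow> 0 \<le> letter_input_law M n N E j t x"
  unfolding letter_input_law_def valid_encoder_def by (intro sum_nonneg) auto

lemma sum_letter_input_law:
  fixes E :: "nat \<Rightarrow> (nat \<Rightarrow> nat \<Rightarrow> 'x::finite) \<Rightarrow> real"
  assumes "valid_encoder M n N E" "1 \<le> N"
  shows "(\<Sum>x\<in>UNIV. letter_input_law M n N E j t x) = 1"
  using sum_letter_input_law_mult[of M n N E j t "\<lambda>_. 1"] assms
  by (simp add: valid_encoder_def sum_divide_distrib[symmetric])

lemma avg_input_law_in_input_dists:
  fixes E :: "nat \<Rightarrow> (nat \<Rightarrow> nat \<Rightarrow> 'x::finite) \<Rightarrow> real"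
  assumes E: "valid_encoder M n N E" and N: "1 \<le> N" and n: "0 < n"
  shows "avg_input_law M n N E \<in> input_dists M"
  unfolding input_dists_def
proof (intro CollectI allI impI conjI)
  fix j x
  show "0 \<le> avg_input_law M n N E j x"
    unfolding avg_input_law_def using E by (intro divide_nonneg_nonneg sum_nonneg letter_input_law_nonneg) auto
  have "(\<Sum>x\<in>UNIV. avg_input_law M n N E j x) = (\<Sum>t<n. \<Sum>x\<in>UNIV. letter_input_law M n N E j t x) / real n"
    unfolding avg_input_law_def sum_divide_distrib[symmetric] by (subst sum.swap) (rule refl)
  then show "(\<Sum>x\<in>UNIV. avg_input_law M n N E j x) = 1"
    using n by (simp add: sum_letter_input_law[OF E N])
qed

definition converse_slack :: "real \<Rightarrow> real \<Rightarrow> real" where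
  "converse_slack R \<epsilon> = \<epsilon> - log 2 (1 - \<epsilon>) - \<epsilon> * log 2 \<epsilon> + \<epsilon> * (\<bar>R\<bar> + 1)"

lemma converse_slack_tendsto_0: "(converse_slack R \<longlongrightarrow> 0) (at_right 0)"
  unfolding converse_slack_def log_def by real_asymp

section \<open>A code analysed over a compatible channel\<close>

locale secrecy_code =
  fixes K M n N :: nat
    and W P' :: "nat \<Rightarrow> 'x::finite \<Rightarrow> (nat \<Rightarrow> 'y::finite) \<Rightarrow> 'y \<Rightarrow> real"
    and E :: "nat \<Rightarrow> (nat \<Rightarrow> nat \<Rightarrow> 'x) \<Rightarrow> real"
    and D :: "nat \<Rightarrow> (nat \<Rightarrow> nat \<Rightarrow> 'y) \<Rightarrow> nat"
    and i0 :: nat and \<epsilon> :: real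
  assumes compatible: "P' \<in> compatible_channels K M W"
    and encoder: "valid_encoder M n N E"
    and decoders: "valid_decoders K M n N D"
    and receiver: "i0 < K" and n_pos: "0 < n" and N_pos: "1 \<le> N"
    and \<epsilon>_pos: "0 < \<epsilon>" and \<epsilon>_less_1: "\<epsilon> < 1"
begin

lemma P'_channel: "j < M \<Longrightarrow> is_letter_channel K (P' j)"
  and P'_marginals: "j < M \<Longrightarrow> same_marginals K (W j) (P' j)"
  using compatible unfolding compatible_channels_def by auto

lemma E_nonneg: "w \<in> {1..N} \<Longrightarrow> c \<in> seqs M n \<Longrightarrow> 0 \<le> E w c"
  and sum_E: "w \<in> {1..N} \<Longrightarrow> (\<Sum>c\<in>seqs M n. E w c) = 1"
  using encoder unfolding valid_encoder_def by auto

text \<open>Law of (Y_i0j, Y_ej) given X_j = x under P'; all laws below describe the code used over P'.\<close>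

definition rec_eve_law :: "nat \<Rightarrow> 'x \<Rightarrow> 'y \<Rightarrow> 'y \<Rightarrow> real" where
  "rec_eve_law j x a b = (\<Sum>ys\<in>Yr K. if ys i0 = a then P' j x ys b else 0)"

definition eve_law :: "nat \<Rightarrow> 'x \<Rightarrow> 'y \<Rightarrow> real" where
  "eve_law j x b = (\<Sum>a\<in>UNIV. rec_eve_law j x a b)"

lemma rec_eve_law_nonneg: "j < M \<Longrightarrow> 0 \<le> rec_eve_law j x a b"
  using P'_channel unfolding rec_eve_law_def is_letter_channel_def by (auto intro!: sum_nonneg)

lemma eve_law_nonneg: "j < M \<Longrightarrow> 0 \<le> eve_law j x b"
  unfolding eve_law_def by (auto intro!: sum_nonneg rec_eve_law_nonneg)

lemma sum_rec_eve_law: "j < M \<Longrightarrow> (\<Sum>a\<in>UNIV. \<Sum>b\<in>UNIV. rec_eve_law j x a b) = 1"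
proof -
  assume j: "j < M"
  have "(\<Sum>a\<in>UNIV. \<Sum>b\<in>UNIV. rec_eve_law j x a b)
      = (\<Sum>a\<in>UNIV. \<Sum>ys\<in>Yr K. if ys i0 = a then (\<Sum>b\<in>UNIV. P' j x ys b) else 0)"
    unfolding rec_eve_law_def by (subst sum.swap) (auto intro!: sum.cong)
  also have "\<dots> = (\<Sum>ys\<in>Yr K. \<Sum>b\<in>UNIV. P' j x ys b)" by (rule sum_Yr_if_eq)
  also have "\<dots> = 1" using P'_channel[OF j] unfolding is_letter_channel_def by simp
  finally show ?thesis .
qed

lemma sum_eve_law: "j < M \<Longrightarrow> (\<Sum>b\<in>UNIV. eve_law j x b) = 1"
  unfolding eve_law_def by (subst sum.swap) (rule sum_rec_eve_law)

lemma eve_law_eq_W: "j < M \<Longrightarrow> eve_law j x b = (\<Sum>ys\<in>Yr K. W j x ys b)"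
proof -
  assume j: "j < M"
  have "eve_law j x b = (\<Sum>ys\<in>Yr K. P' j x ys b)" unfolding eve_law_def rec_eve_law_def by (rule sum_Yr_if_eq)
  also have "\<dots> = (\<Sum>ys\<in>Yr K. W j x ys b)" using P'_marginals[OF j] unfolding same_marginals_def by simp
  finally show ?thesis .
qed

lemma sum_receiver_law_eq_W:
  "j < M \<Longrightarrow> (\<Sum>b\<in>UNIV. \<Sum>ys\<in>Yr K. if ys i0 = a then W j x ys b else 0) = (\<Sum>b\<in>UNIV. rec_eve_law j x a b)"
proof -
  assume j: "j < M"
  have "(\<Sum>b\<in>UNIV. \<Sum>ys\<in>Yr K. if ys i0 = a then W j x ys b else 0)
      = (\<Sum>ys\<in>Yr K. \<Sum>b\<in>UNIV. if ys i0 = a then W j x ys b else 0)"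
    by (rule sum.swap)
  also have "\<dots> = (\<Sum>ys\<in>Yr K. \<Sum>b\<in>UNIV. if ys i0 = a then P' j x ys b else 0)"
    using P'_marginals[OF j] receiver unfolding same_marginals_def by simp
  also have "\<dots> = (\<Sum>b\<in>UNIV. rec_eve_law j x a b)" unfolding rec_eve_law_def by (rule sum.swap)
  finally show ?thesis .
qed

definition rec_eve_law_seq :: "(nat \<Rightarrow> nat \<Rightarrow> 'x) \<Rightarrow> (nat \<Rightarrow> nat \<Rightarrow> 'y) \<Rightarrow> (nat \<Rightarrow> nat \<Rightarrow> 'y) \<Rightarrow> real" where
  "rec_eve_law_seq c y z = (\<Prod>j<M. \<Prod>t<n. rec_eve_law j (c j t) (y j t) (z j t))"

definition eve_law_seq :: "(nat \<Rightarrow> nat \<Rightarrow> 'x) \<Rightarrow> (nat \<Rightarrow> nat \<Rightarrow> 'y) \<Rightarrow> real" where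
  "eve_law_seq c z = (\<Prod>j<M. \<Prod>t<n. eve_law j (c j t) (z j t))"

definition joint_law :: "nat \<Rightarrow> (nat \<Rightarrow> nat \<Rightarrow> 'x) \<Rightarrow> (nat \<Rightarrow> nat \<Rightarrow> 'y) \<Rightarrow> (nat \<Rightarrow> nat \<Rightarrow> 'y) \<Rightarrow> real" where
  "joint_law w c y z = E w c / real N * rec_eve_law_seq c y z"

definition msg_eve_law :: "nat \<Rightarrow> (nat \<Rightarrow> nat \<Rightarrow> 'y) \<Rightarrow> real" where
  "msg_eve_law w z = (\<Sum>c\<in>seqs M n. E w c / real N * eve_law_seq c z)"

definition eve_out_law :: "(nat \<Rightarrow> nat \<Rightarrow> 'y) \<Rightarrow> real" where
  "eve_out_law z = (\<Sum>w\<in>{1..N}. msg_eve_law w z)"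

lemma rec_eve_law_seq_nonneg: "0 \<le> rec_eve_law_seq c y z"
  unfolding rec_eve_law_seq_def by (auto intro!: prod_nonneg rec_eve_law_nonneg)

lemma eve_law_seq_nonneg: "0 \<le> eve_law_seq c z"
  unfolding eve_law_seq_def by (auto intro!: prod_nonneg eve_law_nonneg)

lemma joint_law_nonneg: "w \<in> {1..N} \<Longrightarrow> c \<in> seqs M n \<Longrightarrow> 0 \<le> joint_law w c y z"
  unfolding joint_law_def by (intro mult_nonneg_nonneg divide_nonneg_nonneg E_nonneg rec_eve_law_seq_nonneg) auto

lemma msg_eve_law_nonneg: "w \<in> {1..N} \<Longrightarrow> 0 \<le> msg_eve_law w z"
  unfolding msg_eve_law_def by (intro sum_nonneg mult_nonneg_nonneg divide_nonneg_nonneg E_nonneg eve_law_seq_nonneg) auto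

lemma eve_out_law_nonneg: "0 \<le> eve_out_law z"
  unfolding eve_out_law_def by (auto intro!: sum_nonneg msg_eve_law_nonneg)

lemma sum_rec_eve_law_seq_receiver: "(\<Sum>y\<in>seqs M n. rec_eve_law_seq c y z) = eve_law_seq c z"
  unfolding rec_eve_law_seq_def eve_law_seq_def eve_law_def by (rule sum_seqs_prod)

lemma sum_eve_law_seq: "(\<Sum>z\<in>seqs M n. eve_law_seq c z) = 1"
  unfolding eve_law_seq_def by (subst sum_seqs_prod) (simp add: sum_eve_law)

lemma sum_msg_eve_law: "w \<in> {1..N} \<Longrightarrow> (\<Sum>z\<in>seqs M n. msg_eve_law w z) = 1 / real N"
proof -
  assume w: "w \<in> {1..N}"
  have "(\<Sum>z\<in>seqs M n. msg_eve_law w z) = (\<Sum>c\<in>seqs M n. E w c / real N * (\<Sum>z\<in>seqs M n. eve_law_seq c z))"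
    unfolding msg_eve_law_def by (subst sum.swap) (simp add: sum_distrib_left)
  also have "\<dots> = (\<Sum>c\<in>seqs M n. E w c) / real N" by (simp add: sum_eve_law_seq sum_divide_distrib)
  finally show ?thesis using sum_E[OF w] by simp
qed

lemma sum_eve_out_law: "(\<Sum>z\<in>seqs M n. eve_out_law z) = 1"
  unfolding eve_out_law_def using N_pos by (subst sum.swap) (simp add: sum_msg_eve_law)

lemma sum_joint_law_code_receiver: "(\<Sum>c\<in>seqs M n. \<Sum>y\<in>seqs M n. joint_law w c y z) = msg_eve_law w z"
  unfolding joint_law_def msg_eve_law_def
  by (intro sum.cong refl) (simp only: sum_distrib_left[symmetric] sum_rec_eve_law_seq_receiver)

definition expect ::
  "(nat \<Rightarrow> (nat \<Rightarrow> nat \<Rightarrow> 'x) \<Rightarrow> (nat \<Rightarrow> nat \<Rightarrow> 'y) \<Rightarrow> (nat \<Rightarrow> nat \<Rightarrow> 'y) \<Rightarrow> real) \<Rightarrow> real" where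
  "expect F = (\<Sum>w\<in>{1..N}. \<Sum>c\<in>seqs M n. \<Sum>y\<in>seqs M n. \<Sum>z\<in>seqs M n. joint_law w c y z * F w c y z)"

lemma expect_msg_eve:
  "expect (\<lambda>w c y z. h w z) = (\<Sum>w\<in>{1..N}. \<Sum>z\<in>seqs M n. msg_eve_law w z * h w z)"
proof -
  have "(\<Sum>c\<in>seqs M n. \<Sum>y\<in>seqs M n. \<Sum>z\<in>seqs M n. joint_law w c y z * h w z)
      = (\<Sum>z\<in>seqs M n. \<Sum>c\<in>seqs M n. \<Sum>y\<in>seqs M n. joint_law w c y z * h w z)" for w
    by (subst sum.swap, rule sum.cong[OF refl], rule sum.swap)
  then show ?thesis
    unfolding expect_def by (simp add: sum_distrib_right[symmetric] sum_joint_law_code_receiver)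
qed

lemma expect_const: "expect (\<lambda>w c y z. a) = a"
  unfolding expect_msg_eve
  using sum_eve_out_law unfolding eve_out_law_def by (subst sum.swap) (simp add: sum_distrib_right[symmetric])

lemma expect_add: "expect (\<lambda>w c y z. F w c y z + G w c y z) = expect F + expect G"
  unfolding expect_def by (simp add: distrib_left sum.distrib)

lemma expect_diff: "expect (\<lambda>w c y z. F w c y z - G w c y z) = expect F - expect G"
  unfolding expect_def by (simp add: right_diff_distrib sum_subtractf)

lemma expect_uminus: "expect (\<lambda>w c y z. - F w c y z) = - expect F"
  unfolding expect_def by (simp add: sum_negf)

lemma expect_mult_right: "expect (\<lambda>w c y z. F w c y z * a) = expect F * a"
  unfolding expect_def by (simp add: sum_distrib_right mult.assoc)

lemma expect_sum:
  "finite A \<Longrightarrow> expect (\<lambda>w c y z. \<Sum>k\<in>A. F k w c y z) = (\<Sum>k\<in>A. expect (F k))"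
  by (induction A rule: finite_induct) (simp_all add: expect_add, simp add: expect_def)

lemma expect_mono:
  assumes "\<And>w c y z. w \<in> {1..N} \<Longrightarrow> c \<in> seqs M n \<Longrightarrow> F w c y z \<le> G w c y z"
  shows "expect F \<le> expect G"
  unfolding expect_def using assms by (intro sum_mono mult_left_mono joint_law_nonneg) auto

lemma sum_rec_outs_prod_chan: "(\<Sum>yr\<in>rec_outs K M n. prod_chan K M n W c yr z) = eve_law_seq c z"
proof -
  have "(\<Sum>yr\<in>rec_outs K M n. prod_chan K M n W c yr z)
      = (\<Sum>y\<in>seqs M n. \<Prod>j<M. \<Prod>t<n. \<Sum>ys\<in>Yr K. if ys i0 = y j t then W j (c j t) ys (z j t) else 0)"
    using sum_rec_outs_prod_receiver[OF receiver, where G = "\<lambda>j t ys. W j (c j t) ys (z j t)" and f = "\<lambda>_. 1"]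
    unfolding prod_chan_def by simp
  also have "\<dots> = (\<Prod>j<M. \<Prod>t<n. \<Sum>a\<in>UNIV. \<Sum>ys\<in>Yr K. if ys i0 = a then W j (c j t) ys (z j t) else 0)"
    by (rule sum_seqs_prod)
  also have "\<dots> = eve_law_seq c z"
    unfolding eve_law_seq_def by (intro prod.cong refl) (simp add: sum_Yr_if_eq eve_law_eq_W)
  finally show ?thesis .
qed

lemma joint_WYe_eq: "joint_WYe K M n W N E w z = msg_eve_law w z"
  unfolding joint_WYe_def msg_eve_law_def sum_rec_outs_prod_chan by (simp add: sum_distrib_left)

lemma sum_prod_chan_receiver:
  fixes f :: "(nat \<Rightarrow> nat \<Rightarrow> 'y) \<Rightarrow> real"
  shows "(\<Sum>yr\<in>rec_outs K M n. \<Sum>ye\<in>seqs M n. prod_chan K M n W c yr ye * f (yr i0))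
       = (\<Sum>y\<in>seqs M n. \<Sum>z\<in>seqs M n. rec_eve_law_seq c y z * f y)"
proof -
  define V where "V y j t b = (\<Sum>ys\<in>Yr K. if ys i0 = y j t then W j (c j t) ys b else 0)"
    for y :: "nat \<Rightarrow> nat \<Rightarrow> 'y" and j t b
  have "(\<Sum>yr\<in>rec_outs K M n. \<Sum>ye\<in>seqs M n. prod_chan K M n W c yr ye * f (yr i0))
      = (\<Sum>ye\<in>seqs M n. \<Sum>y\<in>seqs M n. f y * (\<Prod>j<M. \<Prod>t<n. V y j t (ye j t)))"
    unfolding prod_chan_def V_def
    by (subst sum.swap) (intro sum.cong refl sum_rec_outs_prod_receiver[OF receiver])
  also have "\<dots> = (\<Sum>y\<in>seqs M n. f y * (\<Sum>ye\<in>seqs M n. \<Prod>j<M. \<Prod>t<n. V y j t (ye j t)))"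
    by (subst sum.swap) (simp add: sum_distrib_left)
  also have "\<dots> = (\<Sum>y\<in>seqs M n. f y * (\<Prod>j<M. \<Prod>t<n. \<Sum>b\<in>UNIV. V y j t b))"
    by (intro sum.cong refl arg_cong2[where f = "(*)"]) (rule sum_seqs_prod)
  also have "\<dots> = (\<Sum>y\<in>seqs M n. f y * (\<Prod>j<M. \<Prod>t<n. \<Sum>b\<in>UNIV. rec_eve_law j (c j t) (y j t) b))"
    unfolding V_def
    by (rule sum.cong[OF refl], rule arg_cong2[where f = "(*)"], rule refl, intro prod.cong refl)
       (simp add: sum_receiver_law_eq_W)
  also have "\<dots> = (\<Sum>y\<in>seqs M n. f y * (\<Sum>z\<in>seqs M n. rec_eve_law_seq c y z))"
    unfolding rec_eve_law_seq_def by (simp add: sum_seqs_prod[where F = "\<lambda>j t b. rec_eve_law j (c j t) (_ j t) b"])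
  finally show ?thesis by (simp add: sum_distrib_left mult.commute)
qed

lemma err_prob_eq: "err_prob K M n W N E D i0 = expect (\<lambda>w c y z. if D i0 y \<noteq> w then 1 else 0)"
proof -
  have "err_prob K M n W N E D i0 = (\<Sum>w\<in>{1..N}. \<Sum>c\<in>seqs M n. E w c / real N *
      (\<Sum>yr\<in>rec_outs K M n. \<Sum>ye\<in>seqs M n. prod_chan K M n W c yr ye * (if D i0 (yr i0) \<noteq> w then 1 else 0)))"
    unfolding err_prob_def by (simp add: sum_distrib_left sum_divide_distrib mult.assoc)
  also have "\<dots> = (\<Sum>w\<in>{1..N}. \<Sum>c\<in>seqs M n. E w c / real N *
      (\<Sum>y\<in>seqs M n. \<Sum>z\<in>seqs M n. rec_eve_law_seq c y z * (if D i0 y \<noteq> w then 1 else 0)))"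
    using sum_prod_chan_receiver[where f = "\<lambda>y. if D i0 y \<noteq> _ then 1 else 0"] by simp
  also have "\<dots> = expect (\<lambda>w c y z. if D i0 y \<noteq> w then 1 else 0)"
    unfolding expect_def joint_law_def by (simp add: sum_distrib_left mult.assoc)
  finally show ?thesis .
qed

lemma cond_ent_WYe_eq:
  "cond_ent_WYe K M n W N E = expect (\<lambda>w c y z. log 2 (eve_out_law z / msg_eve_law w z))"
  unfolding expect_msg_eve cond_ent_WYe_def Let_def joint_WYe_eq eve_out_law_def[symmetric]
  by (intro sum.cong refl) simp

definition letter_law :: "nat \<Rightarrow> 'x \<Rightarrow> 'y \<Rightarrow> 'y \<Rightarrow> real" where
  "letter_law j = joint_xyz K (avg_input_law M n N E j) (P' j) i0"

definition letter_law_xz :: "nat \<Rightarrow> 'x \<Rightarrow> 'y \<Rightarrow> real" where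
  "letter_law_xz j x b = (\<Sum>a\<in>UNIV. letter_law j x a b)"

definition letter_law_yz :: "nat \<Rightarrow> 'y \<Rightarrow> 'y \<Rightarrow> real" where
  "letter_law_yz j a b = (\<Sum>x\<in>UNIV. letter_law j x a b)"

definition letter_law_z :: "nat \<Rightarrow> 'y \<Rightarrow> real" where
  "letter_law_z j b = (\<Sum>x\<in>UNIV. \<Sum>a\<in>UNIV. letter_law j x a b)"

definition info_density :: "nat \<Rightarrow> 'x \<Rightarrow> 'y \<Rightarrow> 'y \<Rightarrow> real" where
  "info_density j x a b = (if letter_law j x a b = 0 then 0
     else log 2 (letter_law j x a b * letter_law_z j b / (letter_law_xz j x b * letter_law_yz j a b)))"

lemma letter_law_eq: "letter_law j x a b = avg_input_law M n N E j x * rec_eve_law j x a b"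
  unfolding letter_law_def joint_xyz_def rec_eve_law_def by simp

lemma cmi_letter_law:
  "cmi (letter_law j) = (\<Sum>x\<in>UNIV. \<Sum>a\<in>UNIV. \<Sum>b\<in>UNIV. letter_law j x a b * info_density j x a b)"
  unfolding cmi_def info_density_def letter_law_xz_def letter_law_yz_def letter_law_z_def Let_def
  by (intro sum.cong refl) auto

lemma expect_letter:
  assumes "j < M" "t < n"
  shows "expect (\<lambda>w c y z. f (c j t) (y j t) (z j t))
       = (\<Sum>x\<in>UNIV. letter_input_law M n N E j t x * (\<Sum>a\<in>UNIV. \<Sum>b\<in>UNIV. rec_eve_law j x a b * f x a b))"
proof -
  have "expect (\<lambda>w c y z. f (c j t) (y j t) (z j t)) = (\<Sum>w\<in>{1..N}. \<Sum>c\<in>seqs M n. E w c / real N *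
      (\<Sum>y\<in>seqs M n. \<Sum>z\<in>seqs M n. rec_eve_law_seq c y z * f (c j t) (y j t) (z j t)))"
    unfolding expect_def joint_law_def by (simp add: sum_distrib_left mult.assoc)
  also have "\<dots> = (\<Sum>w\<in>{1..N}. \<Sum>c\<in>seqs M n. E w c / real N *
      (\<Sum>a\<in>UNIV. \<Sum>b\<in>UNIV. rec_eve_law j (c j t) a b * f (c j t) a b))"
    unfolding rec_eve_law_seq_def
    by (intro sum.cong refl arg_cong2[where f = "(*)"]
          sum_seqs_pairs_prod_letter[OF _ assms, where G = "\<lambda>j t. rec_eve_law j (c j t)" for c, simplified])
       (simp add: sum_rec_eve_law)
  also have "\<dots> = (\<Sum>x\<in>UNIV. letter_input_law M n N E j t x * (\<Sum>a\<in>UNIV. \<Sum>b\<in>UNIV. rec_eve_law j x a b * f x a b))"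
    by (rule sum_letter_input_law_mult[symmetric])
  finally show ?thesis .
qed

lemma expect_info_density:
  "expect (\<lambda>w c y z. \<Sum>j<M. \<Sum>t<n. info_density j (c j t) (y j t) (z j t)) = real n * (\<Sum>j<M. cmi (letter_law j))"
proof -
  define S where "S j x = (\<Sum>a\<in>UNIV. \<Sum>b\<in>UNIV. rec_eve_law j x a b * info_density j x a b)" for j x
  have "expect (\<lambda>w c y z. \<Sum>j<M. \<Sum>t<n. info_density j (c j t) (y j t) (z j t))
      = (\<Sum>j<M. \<Sum>t<n. \<Sum>x\<in>UNIV. letter_input_law M n N E j t x * S j x)"
    unfolding expect_sum[OF finite_lessThan] S_def by (intro sum.cong refl expect_letter) auto
  also have "\<dots> = (\<Sum>j<M. \<Sum>x\<in>UNIV. (\<Sum>t<n. letter_input_law M n N E j t x) * S j x)"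
    by (intro sum.cong refl) (simp add: sum.swap[of _ "{..<n}"] sum_distrib_right)
  also have "\<dots> = (\<Sum>j<M. \<Sum>x\<in>UNIV. real n * (\<Sum>a\<in>UNIV. \<Sum>b\<in>UNIV. letter_law j x a b * info_density j x a b))"
    using n_pos by (intro sum.cong refl) (simp add: avg_input_law_def letter_law_eq S_def sum_distrib_left mult.assoc)
  also have "\<dots> = real n * (\<Sum>j<M. cmi (letter_law j))"
    by (simp add: cmi_letter_law sum_distrib_left)
  finally show ?thesis .
qed

definition guess_law :: "nat \<Rightarrow> (nat \<Rightarrow> nat \<Rightarrow> 'y) \<Rightarrow> real" where
  "guess_law w y = (if D i0 y = w then 1 - \<epsilon> else \<epsilon> / real N)"

lemma guess_law_pos: "0 < guess_law w y"
  using \<epsilon>_pos \<epsilon>_less_1 N_pos unfolding guess_law_def by auto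

lemma sum_guess_law_le: "y \<in> seqs M n \<Longrightarrow> (\<Sum>w\<in>{1..N}. guess_law w y) \<le> 1"
proof -
  assume "y \<in> seqs M n"
  then have D: "D i0 y \<in> {1..N}" using decoders receiver unfolding valid_decoders_def by auto
  have "(\<Sum>w\<in>{1..N}. guess_law w y)
      = (\<Sum>w\<in>{1..N}. \<epsilon> / real N + (if D i0 y = w then 1 - \<epsilon> - \<epsilon> / real N else 0))"
    unfolding guess_law_def by (intro sum.cong refl) auto
  also have "\<dots> = 1 - \<epsilon> / real N" using D N_pos by (simp add: sum.distrib sum.delta)
  finally show ?thesis using \<epsilon>_pos N_pos by simp
qed

lemma expect_neg_log_guess_law_le:
  assumes err: "err_prob K M n W N E D i0 \<le> \<epsilon>"
  shows "expect (\<lambda>w c y z. - log 2 (guess_law w y)) \<le> - log 2 (1 - \<epsilon>) - \<epsilon> * log 2 (\<epsilon> / real N)"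
proof -
  have correct: "0 \<le> - log 2 (1 - \<epsilon>)" and wrong: "0 \<le> - log 2 (\<epsilon> / real N)"
    using \<epsilon>_pos \<epsilon>_less_1 N_pos by (simp_all add: divide_le_eq_1)
  have "expect (\<lambda>w c y z. - log 2 (guess_law w y))
      \<le> expect (\<lambda>w c y z. - log 2 (1 - \<epsilon>) + (if D i0 y \<noteq> w then 1 else 0) * - log 2 (\<epsilon> / real N))"
    using correct wrong by (intro expect_mono) (auto simp: guess_law_def)
  also have "\<dots> = - log 2 (1 - \<epsilon>) + err_prob K M n W N E D i0 * - log 2 (\<epsilon> / real N)"
    by (simp add: expect_diff expect_const expect_mult_right err_prob_eq)
  also have "\<dots> \<le> - log 2 (1 - \<epsilon>) + \<epsilon> * - log 2 (\<epsilon> / real N)"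
    using err wrong by (intro add_left_mono mult_right_mono)
  finally show ?thesis by simp
qed

definition rec_given_eve :: "nat \<Rightarrow> 'y \<Rightarrow> 'y \<Rightarrow> real" where
  "rec_given_eve j a b = letter_law_yz j a b / letter_law_z j b"

definition rec_given_eve_seq :: "(nat \<Rightarrow> nat \<Rightarrow> 'y) \<Rightarrow> (nat \<Rightarrow> nat \<Rightarrow> 'y) \<Rightarrow> real" where
  "rec_given_eve_seq y z = (\<Prod>j<M. \<Prod>t<n. rec_given_eve j (y j t) (z j t))"

lemma letter_law_nonneg: "j < M \<Longrightarrow> 0 \<le> letter_law j x a b"
  unfolding letter_law_eq avg_input_law_def using encoder
  by (intro mult_nonneg_nonneg divide_nonneg_nonneg sum_nonneg letter_input_law_nonneg rec_eve_law_nonneg) auto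

lemma rec_given_eve_nonneg: "j < M \<Longrightarrow> 0 \<le> rec_given_eve j a b"
  unfolding rec_given_eve_def letter_law_yz_def letter_law_z_def
  by (intro divide_nonneg_nonneg sum_nonneg letter_law_nonneg)

lemma sum_rec_given_eve_le: "(\<Sum>a\<in>UNIV. rec_given_eve j a b) \<le> 1"
proof -
  have "(\<Sum>a\<in>UNIV. rec_given_eve j a b) = (\<Sum>a\<in>UNIV. letter_law_yz j a b) / letter_law_z j b"
    unfolding rec_given_eve_def by (simp add: sum_divide_distrib)
  also have "(\<Sum>a\<in>UNIV. letter_law_yz j a b) = letter_law_z j b"
    unfolding letter_law_yz_def letter_law_z_def by (rule sum.swap)
  finally show ?thesis by simp
qed

lemma rec_given_eve_seq_nonneg: "0 \<le> rec_given_eve_seq y z"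
  unfolding rec_given_eve_seq_def by (intro prod_nonneg rec_given_eve_nonneg) auto

lemma sum_rec_given_eve_seq_le: "(\<Sum>y\<in>seqs M n. rec_given_eve_seq y z) \<le> 1"
  unfolding rec_given_eve_seq_def sum_seqs_prod[where F = "\<lambda>j t a. rec_given_eve j a (z j t)"]
  by (intro prod_le_1 conjI prod_nonneg sum_nonneg rec_given_eve_nonneg sum_rec_given_eve_le) auto

text \<open>The factor E w c / N * eve_law_seq c z / msg_eve_law w z is the law of the codeword given
  (W, Y_e^n) = (w, z).\<close>

definition aux_law :: "nat \<Rightarrow> (nat \<Rightarrow> nat \<Rightarrow> 'x) \<Rightarrow> (nat \<Rightarrow> nat \<Rightarrow> 'y) \<Rightarrow> (nat \<Rightarrow> nat \<Rightarrow> 'y) \<Rightarrow> real" where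
  "aux_law w c y z = E w c / real N * eve_law_seq c z
     * (eve_out_law z * guess_law w y * rec_given_eve_seq y z / msg_eve_law w z)"

lemma aux_law_nonneg: "w \<in> {1..N} \<Longrightarrow> c \<in> seqs M n \<Longrightarrow> 0 \<le> aux_law w c y z"
  unfolding aux_law_def
  by (intro mult_nonneg_nonneg divide_nonneg_nonneg E_nonneg eve_law_seq_nonneg eve_out_law_nonneg
        msg_eve_law_nonneg rec_given_eve_seq_nonneg less_imp_le[OF guess_law_pos]) auto

lemma sum_aux_law_le:
  "(\<Sum>w\<in>{1..N}. \<Sum>c\<in>seqs M n. \<Sum>y\<in>seqs M n. \<Sum>z\<in>seqs M n. aux_law w c y z) \<le> 1"
proof -
  define G where "G w y z = eve_out_law z * guess_law w y * rec_given_eve_seq y z" for w y z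
  have G_nonneg: "0 \<le> G w y z" for w y z
    unfolding G_def
    by (intro mult_nonneg_nonneg eve_out_law_nonneg rec_given_eve_seq_nonneg less_imp_le[OF guess_law_pos])
  have per_message: "(\<Sum>c\<in>seqs M n. \<Sum>y\<in>seqs M n. \<Sum>z\<in>seqs M n. aux_law w c y z)
      \<le> (\<Sum>y\<in>seqs M n. \<Sum>z\<in>seqs M n. G w y z)" for w
  proof -
    have "(\<Sum>c\<in>seqs M n. \<Sum>y\<in>seqs M n. \<Sum>z\<in>seqs M n. aux_law w c y z)
        = (\<Sum>y\<in>seqs M n. \<Sum>z\<in>seqs M n. msg_eve_law w z * (G w y z / msg_eve_law w z))"
      unfolding aux_law_def G_def msg_eve_law_def sum_distrib_right
      by (subst sum.swap, rule sum.cong[OF refl], subst sum.swap) (rule refl)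
    also have "\<dots> \<le> (\<Sum>y\<in>seqs M n. \<Sum>z\<in>seqs M n. G w y z)"
      using G_nonneg by (intro sum_mono) (simp add: divide_simps)
    finally show ?thesis .
  qed
  have "(\<Sum>w\<in>{1..N}. \<Sum>c\<in>seqs M n. \<Sum>y\<in>seqs M n. \<Sum>z\<in>seqs M n. aux_law w c y z)
      \<le> (\<Sum>w\<in>{1..N}. \<Sum>y\<in>seqs M n. \<Sum>z\<in>seqs M n. G w y z)"
    by (intro sum_mono per_message)
  also have "\<dots> = (\<Sum>y\<in>seqs M n. \<Sum>z\<in>seqs M n. eve_out_law z * rec_given_eve_seq y z * (\<Sum>w\<in>{1..N}. guess_law w y))"
    unfolding G_def
    by (subst sum.swap, rule sum.cong[OF refl], subst sum.swap) (simp add: sum_distrib_left ac_simps)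
  also have "\<dots> \<le> (\<Sum>y\<in>seqs M n. \<Sum>z\<in>seqs M n. eve_out_law z * rec_given_eve_seq y z)"
    by (intro sum_mono mult_left_le sum_guess_law_le mult_nonneg_nonneg eve_out_law_nonneg rec_given_eve_seq_nonneg)
  also have "\<dots> = (\<Sum>z\<in>seqs M n. eve_out_law z * (\<Sum>y\<in>seqs M n. rec_given_eve_seq y z))"
    by (subst sum.swap) (simp add: sum_distrib_left)
  also have "\<dots> \<le> (\<Sum>z\<in>seqs M n. eve_out_law z)"
    by (intro sum_mono mult_left_le sum_rec_given_eve_seq_le eve_out_law_nonneg)
  finally show ?thesis by (simp add: sum_eve_out_law)
qed

lemma joint_law_posD:
  assumes w: "w \<in> {1..N}" and c: "c \<in> seqs M n" and pos: "0 < joint_law w c y z"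
  shows "0 < E w c"
    and "0 < rec_eve_law_seq c y z"
    and "j < M \<Longrightarrow> t < n \<Longrightarrow> 0 < rec_eve_law j (c j t) (y j t) (z j t)"
    and "j < M \<Longrightarrow> t < n \<Longrightarrow> 0 < avg_input_law M n N E j (c j t)"
proof -
  have "E w c \<noteq> 0" "rec_eve_law_seq c y z \<noteq> 0" using pos unfolding joint_law_def by auto
  then show E_pos: "0 < E w c" and "0 < rec_eve_law_seq c y z"
    using E_nonneg[OF w c] rec_eve_law_seq_nonneg[of c y z] by linarith+
  show "0 < rec_eve_law j (c j t) (y j t) (z j t)" if "j < M" "t < n"
  proof -
    have "rec_eve_law j (c j t) (y j t) (z j t) \<noteq> 0"
      using \<open>rec_eve_law_seq c y z \<noteq> 0\<close> that unfolding rec_eve_law_seq_def by (auto simp: prod_zero_iff)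
    then show ?thesis using rec_eve_law_nonneg[OF that(1)] by (simp add: order_le_neq_trans)
  qed
  show "0 < avg_input_law M n N E j (c j t)" if "j < M" "t < n"
  proof -
    have "E w c / real N \<le> (\<Sum>c'\<in>seqs M n. if c' j t = c j t then E w c' / real N else 0)"
      using member_le_sum[OF c, of "\<lambda>c'. if c' j t = c j t then E w c' / real N else 0"] E_nonneg w
      by auto
    also have "\<dots> \<le> letter_input_law M n N E j t (c j t)"
      unfolding letter_input_law_def using w E_nonneg
      by (intro member_le_sum[of w _ "\<lambda>w. \<Sum>c'\<in>seqs M n. if c' j t = c j t then E w c' / real N else 0"]
            sum_nonneg) auto
    also have "\<dots> \<le> (\<Sum>s<n. letter_input_law M n N E j s (c j t))"
      using that encoder by (intro member_le_sum letter_input_law_nonneg) auto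
    finally have "E w c / real N \<le> (\<Sum>s<n. letter_input_law M n N E j s (c j t))" .
    moreover have "0 < E w c / real N" using E_pos N_pos by simp
    ultimately show ?thesis
      unfolding avg_input_law_def using n_pos by (intro divide_pos_pos) auto
  qed
qed

lemma info_density_eq:
  assumes j: "j < M" and rec_eve: "0 < rec_eve_law j x a b" and avg: "0 < avg_input_law M n N E j x"
  shows "0 < eve_law j x b" and "0 < rec_given_eve j a b"
    and "info_density j x a b = log 2 (rec_eve_law j x a b / (eve_law j x b * rec_given_eve j a b))"
proof -
  have "rec_eve_law j x a b \<le> eve_law j x b"
    unfolding eve_law_def using j by (intro member_le_sum rec_eve_law_nonneg) auto
  then show eve: "0 < eve_law j x b" using rec_eve by linarith
  have letter: "0 < letter_law j x a b" unfolding letter_law_eq using rec_eve avg by simp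
  have "letter_law j x a b \<le> letter_law_yz j a b"
    unfolding letter_law_yz_def using j by (intro member_le_sum letter_law_nonneg) auto
  then have yz: "0 < letter_law_yz j a b" using letter by linarith
  have "letter_law_yz j a b \<le> letter_law_z j b"
    unfolding letter_law_z_def sum.swap[of _ UNIV] letter_law_yz_def[symmetric] using j
    by (intro member_le_sum) (auto simp: letter_law_yz_def intro: sum_nonneg letter_law_nonneg)
  then have z: "0 < letter_law_z j b" using yz by linarith
  then show "0 < rec_given_eve j a b" unfolding rec_given_eve_def using yz by simp
  have "letter_law_xz j x b = avg_input_law M n N E j x * eve_law j x b"
    unfolding letter_law_xz_def eve_law_def letter_law_eq by (simp add: sum_distrib_left)
  then show "info_density j x a b = log 2 (rec_eve_law j x a b / (eve_law j x b * rec_given_eve j a b))"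
    unfolding info_density_def rec_given_eve_def using letter rec_eve avg eve z yz
    by (simp add: letter_law_eq field_simps)
qed

lemma sum_info_density_eq:
  assumes w: "w \<in> {1..N}" and c: "c \<in> seqs M n" and pos: "0 < joint_law w c y z"
  shows "0 < eve_law_seq c z" and "0 < rec_given_eve_seq y z"
    and "(\<Sum>j<M. \<Sum>t<n. info_density j (c j t) (y j t) (z j t))
         = log 2 (rec_eve_law_seq c y z / (eve_law_seq c z * rec_given_eve_seq y z))"
proof -
  have letter: "0 < eve_law j (c j t) (z j t)" "0 < rec_given_eve j (y j t) (z j t)"
    "info_density j (c j t) (y j t) (z j t)
       = log 2 (rec_eve_law j (c j t) (y j t) (z j t) / (eve_law j (c j t) (z j t) * rec_given_eve j (y j t) (z j t)))"
    if "j < M" "t < n" for j t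
    using info_density_eq[OF that(1) joint_law_posD(3)[OF assms that] joint_law_posD(4)[OF assms that]] by auto
  show "0 < eve_law_seq c z" unfolding eve_law_seq_def using letter(1) by (auto intro!: prod_pos)
  show "0 < rec_given_eve_seq y z" unfolding rec_given_eve_seq_def using letter(2) by (auto intro!: prod_pos)
  define r where "r j t = rec_eve_law j (c j t) (y j t) (z j t) / (eve_law j (c j t) (z j t) * rec_given_eve j (y j t) (z j t))"
    for j t
  have r_pos: "0 < r j t" if "j < M" "t < n" for j t
    unfolding r_def using letter[OF that] joint_law_posD(3)[OF assms that] by simp
  have "(\<Sum>j<M. \<Sum>t<n. info_density j (c j t) (y j t) (z j t)) = (\<Sum>j<M. \<Sum>t<n. log 2 (r j t))"
    unfolding r_def using letter(3) by (intro sum.cong refl) auto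
  also have "\<dots> = (\<Sum>j<M. log 2 (\<Prod>t<n. r j t))"
    using r_pos by (intro sum.cong refl log_prod[symmetric]) force+
  also have "\<dots> = log 2 (\<Prod>j<M. \<Prod>t<n. r j t)"
    using r_pos by (intro log_prod[symmetric]) (auto simp: prod_zero_iff, fastforce)
  also have "(\<Prod>j<M. \<Prod>t<n. r j t) = rec_eve_law_seq c y z / (eve_law_seq c z * rec_given_eve_seq y z)"
    unfolding r_def rec_eve_law_seq_def eve_law_seq_def rec_given_eve_seq_def by (simp add: prod_dividef prod.distrib)
  finally show "(\<Sum>j<M. \<Sum>t<n. info_density j (c j t) (y j t) (z j t))
      = log 2 (rec_eve_law_seq c y z / (eve_law_seq c z * rec_given_eve_seq y z))" .
qed

lemma log_ratio_eq:
  assumes w: "w \<in> {1..N}" and c: "c \<in> seqs M n" and pos: "0 < joint_law w c y z"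
  shows "0 < aux_law w c y z"
    and "log 2 (eve_out_law z / msg_eve_law w z) + log 2 (guess_law w y)
           - (\<Sum>j<M. \<Sum>t<n. info_density j (c j t) (y j t) (z j t))
         = log 2 (aux_law w c y z / joint_law w c y z)"
proof -
  note densities = sum_info_density_eq[OF assms] and support = joint_law_posD[OF assms]
  have E: "0 < E w c / real N" using support(1) N_pos by simp
  have "E w c / real N * eve_law_seq c z \<le> msg_eve_law w z"
    unfolding msg_eve_law_def using w c E_nonneg eve_law_seq_nonneg
    by (intro member_le_sum[where f = "\<lambda>c. E w c / real N * eve_law_seq c z"]) auto
  then have msg: "0 < msg_eve_law w z" using mult_pos_pos[OF E densities(1)] by linarith
  have "msg_eve_law w z \<le> eve_out_law z"
    unfolding eve_out_law_def using w by (intro member_le_sum msg_eve_law_nonneg) auto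
  then have out: "0 < eve_out_law z" using msg by linarith
  show "0 < aux_law w c y z"
    unfolding aux_law_def using support(1) N_pos densities(1,2) msg out guess_law_pos[of w y]
    by (intro mult_pos_pos divide_pos_pos) auto
  have "aux_law w c y z / joint_law w c y z = eve_out_law z / msg_eve_law w z * guess_law w y
      / (rec_eve_law_seq c y z / (eve_law_seq c z * rec_given_eve_seq y z))"
    unfolding aux_law_def joint_law_def using support(1,2) N_pos densities(1,2) msg by (simp add: field_simps)
  then show "log 2 (eve_out_law z / msg_eve_law w z) + log 2 (guess_law w y)
      - (\<Sum>j<M. \<Sum>t<n. info_density j (c j t) (y j t) (z j t))
      = log 2 (aux_law w c y z / joint_law w c y z)"
    unfolding densities(3) using support(2) densities(1,2) msg out guess_law_pos[of w y]
    by (simp add: log_divide_pos log_mult_pos)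
qed

lemma expect_log_ratio_le:
  "expect (\<lambda>w c y z. log 2 (eve_out_law z / msg_eve_law w z) + log 2 (guess_law w y)
     - (\<Sum>j<M. \<Sum>t<n. info_density j (c j t) (y j t) (z j t))) \<le> 0"
proof -
  let ?S = "\<lambda>F. \<Sum>w\<in>{1..N}. \<Sum>c\<in>seqs M n. \<Sum>y\<in>seqs M n. \<Sum>z\<in>seqs M n. F w c y z"
  have "expect (\<lambda>w c y z. log 2 (eve_out_law z / msg_eve_law w z) + log 2 (guess_law w y)
          - (\<Sum>j<M. \<Sum>t<n. info_density j (c j t) (y j t) (z j t)))
      \<le> ?S (\<lambda>w c y z. (aux_law w c y z - joint_law w c y z) / ln 2)"
    unfolding expect_def
  proof (intro sum_mono)
    fix w and c :: "nat \<Rightarrow> nat \<Rightarrow> 'x" and y z :: "nat \<Rightarrow> nat \<Rightarrow> 'y"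
    assume w: "w \<in> {1..N}" and c: "c \<in> seqs M n"
    show "joint_law w c y z * (log 2 (eve_out_law z / msg_eve_law w z) + log 2 (guess_law w y)
          - (\<Sum>j<M. \<Sum>t<n. info_density j (c j t) (y j t) (z j t)))
        \<le> (aux_law w c y z - joint_law w c y z) / ln 2"
    proof (cases "joint_law w c y z = 0")
      case True
      then show ?thesis using aux_law_nonneg[OF w c] by simp
    next
      case False
      then have pos: "0 < joint_law w c y z" using joint_law_nonneg[OF w c, of y z] by linarith
      show ?thesis
        unfolding log_ratio_eq(2)[OF w c pos] by (rule mult_log_ratio_le[OF pos log_ratio_eq(1)[OF w c pos]])
    qed
  qed
  also have "\<dots> = (?S aux_law - ?S joint_law) / ln 2"
    by (simp add: sum_divide_distrib[symmetric] sum_subtractf diff_divide_distrib)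
  also have "\<dots> \<le> 0"
    using sum_aux_law_le expect_const[of 1] unfolding expect_def by (simp add: divide_nonpos_pos)
  finally show ?thesis .
qed

theorem cond_ent_WYe_le:
  assumes err: "err_prob K M n W N E D i0 \<le> \<epsilon>"
  shows "cond_ent_WYe K M n W N E
         \<le> real n * (\<Sum>j<M. cmi (letter_law j)) - log 2 (1 - \<epsilon>) - \<epsilon> * log 2 (\<epsilon> / real N)"
  using expect_log_ratio_le expect_neg_log_guess_law_le[OF err]
  unfolding cond_ent_WYe_eq expect_info_density[symmetric]
  by (simp add: expect_add expect_diff expect_uminus)

end

section \<open>The converse bound\<close>

lemma code_rate_le_sum_cmi:
  fixes W P' :: "nat \<Rightarrow> 'x::finite \<Rightarrow> (nat \<Rightarrow> 'y::finite) \<Rightarrow> 'y \<Rightarrow> real"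
  assumes "P' \<in> compatible_channels K M W" and "i < K" and \<epsilon>: "0 < \<epsilon>" "\<epsilon> < 1" and n: "0 < n"
    and "valid_encoder M n (num_msgs n R) E" and "valid_decoders K M n (num_msgs n R) D"
    and err: "err_prob K M n W (num_msgs n R) E D i \<le> \<epsilon>"
    and rate: "R - \<epsilon> \<le> cond_ent_WYe K M n W (num_msgs n R) E / real n"
  shows "R - converse_slack R \<epsilon> \<le> (\<Sum>j<M. cmi (joint_xyz K (avg_input_law M n (num_msgs n R) E j) (P' j) i))"
proof -
  define N where "N = num_msgs n R"
  interpret secrecy_code K M n N W P' E D i \<epsilon>
    using assms one_le_num_msgs unfolding N_def by unfold_locales auto
  define S where "S = (\<Sum>j<M. cmi (letter_law j))"
  have n1: "1 \<le> real n" using n by simp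
  have "0 \<le> - log 2 (1 - \<epsilon>)" "0 \<le> - (\<epsilon> * log 2 \<epsilon>)" "0 \<le> \<epsilon>"
    using \<epsilon> by (simp_all add: mult_nonneg_nonpos)
  then have n_times: "- log 2 (1 - \<epsilon>) \<le> real n * - log 2 (1 - \<epsilon>)"
      "- (\<epsilon> * log 2 \<epsilon>) \<le> real n * - (\<epsilon> * log 2 \<epsilon>)" "\<epsilon> \<le> real n * \<epsilon>"
    using n1 by (metis mult_1 mult_right_mono)+
  have log_N: "\<epsilon> * log 2 (real N) \<le> \<epsilon> * (real n * \<bar>R\<bar> + 1)"
    using log_num_msgs_le \<epsilon> unfolding N_def by (intro mult_left_mono) auto
  have "real n * (R - \<epsilon>) \<le> cond_ent_WYe K M n W N E"
    using rate n unfolding N_def by (simp add: pos_le_divide_eq mult.commute)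
  also have "\<dots> \<le> real n * S - log 2 (1 - \<epsilon>) - \<epsilon> * log 2 (\<epsilon> / real N)"
    using cond_ent_WYe_le err unfolding S_def N_def by blast
  also have "\<dots> = real n * S - log 2 (1 - \<epsilon>) - \<epsilon> * log 2 \<epsilon> + \<epsilon> * log 2 (real N)"
    using \<epsilon> N_pos by (simp add: log_divide_pos algebra_simps)
  also have "\<dots> \<le> real n * (S + converse_slack R \<epsilon> - \<epsilon>)"
    using n_times log_N unfolding converse_slack_def by (simp add: algebra_simps)
  finally have "R - converse_slack R \<epsilon> \<le> S"
    using n by (simp add: mult_le_cancel_left_pos)
  then show ?thesis unfolding S_def letter_law_def by (simp add: N_def)
qed

lemma bdd_above_min_cmi:
  fixes W P' :: "nat \<Rightarrow> 'x::finite \<Rightarrow> (nat \<Rightarrow> 'y::finite) \<Rightarrow> 'y \<Rightarrow> real"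
  assumes K: "1 \<le> K" and P': "P' \<in> compatible_channels K M W"
  shows "bdd_above ((\<lambda>p. Min ((\<lambda>i. \<Sum>j<M. cmi (joint_xyz K (p j) (P' j) i)) ` {0..<K})) ` input_dists M)"
proof (rule bdd_aboveI2)
  fix p :: "nat \<Rightarrow> 'x \<Rightarrow> real" assume p: "p \<in> input_dists M"
  have "Min ((\<lambda>i. \<Sum>j<M. cmi (joint_xyz K (p j) (P' j) i)) ` {0..<K}) \<le> (\<Sum>j<M. cmi (joint_xyz K (p j) (P' j) 0))"
    using K by (intro Min_le) auto
  also have "\<dots> \<le> (\<Sum>j<M. real (card (UNIV :: 'x set) * card (UNIV :: 'y set) * card (UNIV :: 'y set)) / ln 2)"
  proof (intro sum_mono cmi_le_card)
    fix j assume "j \<in> {..<M}"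
    then have "is_letter_channel K (P' j)" "\<And>x. 0 \<le> p j x" "(\<Sum>x\<in>UNIV. p j x) = 1"
      using P' p unfolding compatible_channels_def input_dists_def by auto
    then show "0 \<le> joint_xyz K (p j) (P' j) 0 x y z"
      and "(\<Sum>x\<in>UNIV. \<Sum>y\<in>UNIV. \<Sum>z\<in>UNIV. joint_xyz K (p j) (P' j) 0 x y z) \<le> 1" for x y z
      by (simp_all add: joint_xyz_nonneg sum_joint_xyz)
  qed
  finally show "Min ((\<lambda>i. \<Sum>j<M. cmi (joint_xyz K (p j) (P' j) i)) ` {0..<K})
      \<le> real M * (real (card (UNIV :: 'x set) * card (UNIV :: 'y set) * card (UNIV :: 'y set)) / ln 2)"
    by simp
qed

lemma achievable_le_SUP_min_cmi:
  fixes W P' :: "nat \<Rightarrow> 'x::finite \<Rightarrow> (nat \<Rightarrow> 'y::finite) \<Rightarrow> 'y \<Rightarrow> real"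
  assumes K: "1 \<le> K" and P': "P' \<in> compatible_channels K M W" and R: "achievable K M W R"
  shows "R \<le> (SUP p\<in>input_dists M. Min ((\<lambda>i. \<Sum>j<M. cmi (joint_xyz K (p j) (P' j) i)) ` {0..<K}))"
    (is "R \<le> ?S")
proof -
  have "R \<le> ?S + converse_slack R \<epsilon>" if \<epsilon>: "0 < \<epsilon>" "\<epsilon> < 1" for \<epsilon>
  proof -
    obtain n E D where n: "0 < n"
      and code: "valid_encoder M n (num_msgs n R) E" "valid_decoders K M n (num_msgs n R) D"
      and err: "\<forall>i<K. err_prob K M n W (num_msgs n R) E D i \<le> \<epsilon>"
      and rate: "R - \<epsilon> \<le> cond_ent_WYe K M n W (num_msgs n R) E / real n"
      using R \<epsilon> unfolding achievable_def by blast
    have "R - converse_slack R \<epsilon>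
        \<le> Min ((\<lambda>i. \<Sum>j<M. cmi (joint_xyz K (avg_input_law M n (num_msgs n R) E j) (P' j) i)) ` {0..<K})"
      using K P' \<epsilon> n code err rate by (subst Min_ge_iff) (auto intro!: code_rate_le_sum_cmi)
    also have "\<dots> \<le> ?S"
      using avg_input_law_in_input_dists[OF code(1) one_le_num_msgs n] bdd_above_min_cmi[OF K P']
      by (rule cSUP_upper)
    finally show ?thesis by simp
  qed
  then have "\<forall>\<^sub>F \<epsilon> in at_right 0. R \<le> ?S + converse_slack R \<epsilon>"
    unfolding eventually_at_right_field by (intro exI[of _ 1]) auto
  moreover have "((\<lambda>\<epsilon>. ?S + converse_slack R \<epsilon>) \<longlongrightarrow> ?S + 0) (at_right 0)"
    by (intro tendsto_add tendsto_const converse_slack_tendsto_0)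
  ultimately have "R \<le> ?S + 0" by (intro tendsto_lowerbound) auto
  then show ?thesis by simp
qed

theorem lemma1:
  fixes W :: "nat \<Rightarrow> 'x::finite \<Rightarrow> (nat \<Rightarrow> 'y::finite) \<Rightarrow> 'y \<Rightarrow> real"
    and K M :: nat
  assumes "1 \<le> K" and "1 \<le> M"
    and "\<forall>j<M. is_letter_channel K (W j)"
  shows "secrecy_capacity K M W \<le> secrecy_bound K M W"
proof -
  have "W \<in> compatible_channels K M W"
    using assms(3) unfolding compatible_channels_def same_marginals_def by auto
  moreover have "achievable K M W 0" by (rule achievable_nonpos) simp
  ultimately show ?thesis
    unfolding secrecy_capacity_def secrecy_bound_def using assms(1)
    by (intro cINF_greatest cSup_least achievable_le_SUP_min_cmi) auto
qed

end
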